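(* Let $D$ be a vertex-supported divisor on a metric graph $\Gamma$. If $C$ is an anchor cell of $|D|$ represented by a divisor $D+(f)$ with $f\in R(D)$, then $C$ is uniquely determined by the outgoing slopes of $f$ at all vertices of $\Gamma$ (along all edges incident to them).
   Context: A metric graph $\Gamma=(V,E)$ is a connected undirected graph whose edges have positive real lengths $M_e$. Divisors are finite formal $\mathbb{Z}$-combinations of points of $\Gamma$; effective means nonnegative coefficients; vertex-supported means support in $V$. A rational function is a continuous $f:\Gamma\to\mathbb{R}$, piecewise linear on each edge with finitely many pieces and integer slopes; $(f)=\sum_x\mathrm{ord}_x(f)x$ with $\mathrm{ord}_x(f)$ the sum of outgoing slopes at $x$. $R(D)=\{f:D+(f)\text{ effective}\}$, $|D|=\{D+(f):f\in R(D)\}$. Cells of $|D|$: identify each open edge $e$ with $(0,M_e)$. A cell is given by data: nonnegative integers $d_v$ ($v\in V$), ordered partitions $d_e=\sum_{i=1}^{r_e}d_e^i$ into positive integers for some edges, and integers $m_e$ ($e\in E$); $L\in|D|$ belongs to it iff $L(v)=d_v$, $L|_{e^\circ}=\sum_i d_e^ix_i$ with $0<x_1<\dots<x_{r_e}<M_e$ on edges with a partition and $L|_{e^\circ}=0$ otherwise, and every $f\in R(D)$ with $L=D+(f)$ has outgoing slope $m_e$ at $0\in e$. Elements of a cell are its representatives; a cell is determined by its data. An anchor divisor is a divisor with at most one positive interior point on each edge; an anchor cell is a cell all of whose representatives are anchor divisors. *)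

theory Defs
  imports Complex_Main
begin

text \<open>A metric graph: vertex set, edge set, each edge oriented from its tail to its
  head (only to fix the identification of the open edge with the interval (0, len e)),
  and positive edge lengths.  Multiple edges and loops are allowed.\<close>

record ('v,'e) mgraph =
  verts :: "'v set"
  edges :: "'e set"
  tail  :: "'e \<Rightarrow> 'v"
  head  :: "'e \<Rightarrow> 'v"
  elen  :: "'e \<Rightarrow> real"

text \<open>Points of the metric graph: a vertex, or the point at parameter t of edge e
  (only meaningful for 0 < t < elen e).\<close>
datatype ('v,'e) point = Vtx 'v | Pt 'e real

definition valid_pt :: "('v,'e) mgraph \<Rightarrow> ('v,'e) point \<Rightarrow> bool" where
  "valid_pt G x = (case x of Vtx v \<Rightarrow> v \<in> verts G
                   | Pt e t \<Rightarrow> e \<in> edges G \<and> 0 < t \<and> t < elen G e)"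

definition adj :: "('v,'e) mgraph \<Rightarrow> ('v \<times> 'v) set" where
  "adj G = {(tail G e, head G e) | e. e \<in> edges G} \<union> {(head G e, tail G e) | e. e \<in> edges G}"

definition metric_graph :: "('v,'e) mgraph \<Rightarrow> bool" where
  "metric_graph G \<longleftrightarrow> finite (verts G) \<and> finite (edges G) \<and> verts G \<noteq> {} \<and>
     (\<forall>e\<in>edges G. tail G e \<in> verts G \<and> head G e \<in> verts G \<and> elen G e > 0) \<and>
     (\<forall>u\<in>verts G. \<forall>w\<in>verts G. (u, w) \<in> (adj G)\<^sup>*)"

definition divisor :: "('v,'e) mgraph \<Rightarrow> (('v,'e) point \<Rightarrow> int) \<Rightarrow> bool" where
  "divisor G D \<longleftrightarrow> finite {x. D x \<noteq> 0} \<and> (\<forall>x. D x \<noteq> 0 \<longrightarrow> valid_pt G x)"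

definition vertex_supported :: "('v,'e) mgraph \<Rightarrow> (('v,'e) point \<Rightarrow> int) \<Rightarrow> bool" where
  "vertex_supported G D \<longleftrightarrow> (\<forall>x. D x \<noteq> 0 \<longrightarrow> (\<exists>v\<in>verts G. x = Vtx v))"

definition edge_fun :: "('v,'e) mgraph \<Rightarrow> (('v,'e) point \<Rightarrow> real) \<Rightarrow> 'e \<Rightarrow> real \<Rightarrow> real" where
  "edge_fun G f e t = (if t \<le> 0 then f (Vtx (tail G e))
                       else if elen G e \<le> t then f (Vtx (head G e)) else f (Pt e t))"

definition pl_int_on :: "(real \<Rightarrow> real) \<Rightarrow> real \<Rightarrow> bool" where
  "pl_int_on g M \<longleftrightarrow> (\<exists>ts. sorted_wrt (<) ts \<and> 2 \<le> length ts \<and> hd ts = 0 \<and> last ts = M \<and>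
      (\<forall>i. Suc i < length ts \<longrightarrow>
         (\<exists>s::int. \<forall>t\<in>{ts ! i .. ts ! Suc i}. g t = g (ts ! i) + of_int s * (t - ts ! i))))"

definition rat_fun :: "('v,'e) mgraph \<Rightarrow> (('v,'e) point \<Rightarrow> real) \<Rightarrow> bool" where
  "rat_fun G f \<longleftrightarrow> (\<forall>e\<in>edges G. pl_int_on (edge_fun G f e) (elen G e))"

text \<open>Outgoing slope of g at t in the direction of increasing / decreasing parameter.\<close>
definition fwd_slope :: "(real \<Rightarrow> real) \<Rightarrow> real \<Rightarrow> int" where
  "fwd_slope g t = (THE s::int. \<forall>\<^sub>F h in at_right (0::real). g (t + h) = g t + of_int s * h)"

definition bwd_slope :: "(real \<Rightarrow> real) \<Rightarrow> real \<Rightarrow> int" where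
  "bwd_slope g t = (THE s::int. \<forall>\<^sub>F h in at_right (0::real). g (t - h) = g t + of_int s * h)"

definition ordf :: "('v,'e) mgraph \<Rightarrow> (('v,'e) point \<Rightarrow> real) \<Rightarrow> ('v,'e) point \<Rightarrow> int" where
  "ordf G f x = (case x of
      Pt e t \<Rightarrow> fwd_slope (edge_fun G f e) t + bwd_slope (edge_fun G f e) t
    | Vtx v \<Rightarrow> (\<Sum>e\<in>{e\<in>edges G. tail G e = v}. fwd_slope (edge_fun G f e) 0)
              + (\<Sum>e\<in>{e\<in>edges G. head G e = v}. bwd_slope (edge_fun G f e) (elen G e)))"

definition prin :: "('v,'e) mgraph \<Rightarrow> (('v,'e) point \<Rightarrow> real) \<Rightarrow> ('v,'e) point \<Rightarrow> int" where
  "prin G f x = (if valid_pt G x then ordf G f x else 0)"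

definition plus_prin :: "('v,'e) mgraph \<Rightarrow> (('v,'e) point \<Rightarrow> int) \<Rightarrow> (('v,'e) point \<Rightarrow> real) \<Rightarrow> ('v,'e) point \<Rightarrow> int" where
  "plus_prin G D f = (\<lambda>x. D x + prin G f x)"

definition effective :: "(('v,'e) point \<Rightarrow> int) \<Rightarrow> bool" where
  "effective L \<longleftrightarrow> (\<forall>x. 0 \<le> L x)"

definition RD :: "('v,'e) mgraph \<Rightarrow> (('v,'e) point \<Rightarrow> int) \<Rightarrow> (('v,'e) point \<Rightarrow> real) set" where
  "RD G D = {f. rat_fun G f \<and> effective (plus_prin G D f)}"

definition linsys :: "('v,'e) mgraph \<Rightarrow> (('v,'e) point \<Rightarrow> int) \<Rightarrow> (('v,'e) point \<Rightarrow> int) set" where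
  "linsys G D = {plus_prin G D f | f. f \<in> RD G D}"

text \<open>Membership of L in the cell with data (dv, part, m).  part e = [] means that
  edge e carries no partition; otherwise part e = [d_e^1, ..., d_e^{r_e}].\<close>
definition in_cell :: "('v,'e) mgraph \<Rightarrow> (('v,'e) point \<Rightarrow> int) \<Rightarrow>
    ('v \<Rightarrow> nat) \<Rightarrow> ('e \<Rightarrow> nat list) \<Rightarrow> ('e \<Rightarrow> int) \<Rightarrow> (('v,'e) point \<Rightarrow> int) \<Rightarrow> bool" where
  "in_cell G D dv part m L \<longleftrightarrow> L \<in> linsys G D \<and>
     (\<forall>v\<in>verts G. L (Vtx v) = int (dv v)) \<and>
     (\<forall>e\<in>edges G. \<exists>xs::real list. length xs = length (part e) \<and> sorted_wrt (<) xs \<and>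
          (\<forall>x\<in>set xs. 0 < x \<and> x < elen G e) \<and>
          (\<forall>i<length xs. L (Pt e (xs ! i)) = int (part e ! i)) \<and>
          (\<forall>t. 0 < t \<and> t < elen G e \<and> t \<notin> set xs \<longrightarrow> L (Pt e t) = 0)) \<and>
     (\<forall>e\<in>edges G. \<forall>f\<in>RD G D. L = plus_prin G D f \<longrightarrow> fwd_slope (edge_fun G f e) 0 = m e)"

definition is_cell :: "('v,'e) mgraph \<Rightarrow> (('v,'e) point \<Rightarrow> int) \<Rightarrow> (('v,'e) point \<Rightarrow> int) set \<Rightarrow> bool" where
  "is_cell G D C \<longleftrightarrow> (\<exists>dv part m. (\<forall>e\<in>edges G. \<forall>k\<in>set (part e). 0 < k) \<and>
       C = {L. in_cell G D dv part m L})"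

definition anchor_divisor :: "('v,'e) mgraph \<Rightarrow> (('v,'e) point \<Rightarrow> int) \<Rightarrow> bool" where
  "anchor_divisor G L \<longleftrightarrow> (\<forall>e\<in>edges G. \<forall>s t. 0 < s \<and> s < elen G e \<and> 0 < t \<and> t < elen G e \<and>
       0 < L (Pt e s) \<and> 0 < L (Pt e t) \<longrightarrow> s = t)"

definition anchor_cell :: "('v,'e) mgraph \<Rightarrow> (('v,'e) point \<Rightarrow> int) \<Rightarrow> (('v,'e) point \<Rightarrow> int) set \<Rightarrow> bool" where
  "anchor_cell G D C \<longleftrightarrow> is_cell G D C \<and> (\<forall>L\<in>C. anchor_divisor G L)"

definition vertex_slopes :: "('v,'e) mgraph \<Rightarrow> (('v,'e) point \<Rightarrow> real) \<Rightarrow> 'e \<Rightarrow> int \<times> int" where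
  "vertex_slopes G f e = (fwd_slope (edge_fun G f e) 0, bwd_slope (edge_fun G f e) (elen G e))"

end

theory Submission
  imports Defs
begin

text \<open>Restricted to the interior of an edge, D + (f) consists of the orders of f there, and these
  telescope: their sum is minus the two outgoing slopes of f at the end vertices.  In an anchor cell
  an edge carries at most one interior point, so its multiplicity (and whether it exists at all) is
  read off from those two slopes.  The vertex multiplicities D(v) + ord_v(f) and the slopes m_e are
  vertex slopes by definition, so all data of the cell are determined.\<close>

lemma fwd_slope_eqI:
  assumes "0 < b" and "\<And>h. 0 < h \<Longrightarrow> h < b \<Longrightarrow> g (t + h) = g t + of_int s * h"
  shows "fwd_slope g t = s"
  unfolding fwd_slope_def
proof (rule the_equality)
  show lin: "\<forall>\<^sub>F h in at_right 0. g (t + h) = g t + of_int s * h"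
    using assms by (auto simp: eventually_at_right_field)
  fix s' assume "\<forall>\<^sub>F h in at_right 0. g (t + h) = g t + of_int s' * h"
  with lin eventually_at_right_less[of 0]
  have "\<forall>\<^sub>F h in at_right (0::real). 0 < h \<and> of_int s' * h = of_int s * h"
    by eventually_elim auto
  then obtain h :: real where "0 < h" "of_int s' * h = of_int s * h"
    using eventually_happens' by force
  then show "s' = s" by simp
qed

lemma bwd_slope_reflect: "bwd_slope g t = fwd_slope (\<lambda>x. g (- x)) (- t)"
  by (simp add: bwd_slope_def fwd_slope_def)

lemma bwd_slope_eqI:
  assumes "0 < b" and "\<And>h. 0 < h \<Longrightarrow> h < b \<Longrightarrow> g (t - h) = g t + of_int s * h"
  shows "bwd_slope g t = s"
  unfolding bwd_slope_reflect using assms by (auto intro: fwd_slope_eqI)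

definition edge_ord :: "(real \<Rightarrow> real) \<Rightarrow> real \<Rightarrow> int" where
  "edge_ord g t = fwd_slope g t + bwd_slope g t"

definition linear_pieces :: "(real \<Rightarrow> real) \<Rightarrow> real list \<Rightarrow> (nat \<Rightarrow> int) \<Rightarrow> bool" where
  "linear_pieces g ts sl \<longleftrightarrow> sorted_wrt (<) ts \<and> 2 \<le> length ts \<and>
     (\<forall>i t. Suc i < length ts \<longrightarrow> t \<in> {ts ! i .. ts ! Suc i} \<longrightarrow>
        g t = g (ts ! i) + of_int (sl i) * (t - ts ! i))"

lemma pl_int_on_linear_pieces:
  assumes "pl_int_on g M"
  obtains ts sl where "linear_pieces g ts sl" "ts ! 0 = 0" "last ts = M"
proof -
  obtain ts where ts: "sorted_wrt (<) ts" "2 \<le> length ts" "hd ts = 0" "last ts = M"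
    and pieces: "\<forall>i. Suc i < length ts \<longrightarrow>
      (\<exists>s::int. \<forall>t\<in>{ts ! i .. ts ! Suc i}. g t = g (ts ! i) + of_int s * (t - ts ! i))"
    using assms unfolding pl_int_on_def by blast
  from pieces have "\<forall>i. \<exists>s::int. Suc i < length ts \<longrightarrow>
      (\<forall>t\<in>{ts ! i .. ts ! Suc i}. g t = g (ts ! i) + of_int s * (t - ts ! i))"
    by blast
  then obtain sl where sl: "\<forall>i. Suc i < length ts \<longrightarrow>
      (\<forall>t\<in>{ts ! i .. ts ! Suc i}. g t = g (ts ! i) + of_int (sl i) * (t - ts ! i))"
    by (rule choice[THEN exE])
  have "linear_pieces g ts sl" using ts(1,2) sl unfolding linear_pieces_def by blast
  moreover have "ts ! 0 = 0" using ts(2,3) by (metis hd_conv_nth list.size(3) not_numeral_le_zero)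
  ultimately show thesis using ts(4) that by blast
qed

lemma linear_pieces_less:
  assumes "linear_pieces g ts sl" "i < j" "j < length ts"
  shows "ts ! i < ts ! j"
  using assms sorted_wrt_nth_less unfolding linear_pieces_def by blast

lemma linear_pieces_on_piece:
  assumes "linear_pieces g ts sl" "Suc i < length ts" "ts ! i \<le> t" "t \<le> ts ! Suc i"
  shows "g t = g (ts ! i) + of_int (sl i) * (t - ts ! i)"
  using assms unfolding linear_pieces_def atLeastAtMost_iff by blast

lemma fwd_slope_on_piece:
  assumes pieces: "linear_pieces g ts sl" and i: "Suc i < length ts"
    and t: "ts ! i \<le> t" "t < ts ! Suc i"
  shows "fwd_slope g t = sl i"
proof (rule fwd_slope_eqI)
  show "0 < ts ! Suc i - t" using t by simp
  fix h assume "0 < h" "h < ts ! Suc i - t"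
  then have "g (t + h) = g (ts ! i) + of_int (sl i) * (t + h - ts ! i)"
    and "g t = g (ts ! i) + of_int (sl i) * (t - ts ! i)"
    using linear_pieces_on_piece[OF pieces i, of "t + h"] linear_pieces_on_piece[OF pieces i, of t] t
    by simp_all
  then show "g (t + h) = g t + of_int (sl i) * h" by (simp add: algebra_simps)
qed

lemma bwd_slope_on_piece:
  assumes pieces: "linear_pieces g ts sl" and i: "Suc i < length ts"
    and t: "ts ! i < t" "t \<le> ts ! Suc i"
  shows "bwd_slope g t = - sl i"
proof (rule bwd_slope_eqI)
  show "0 < t - ts ! i" using t by simp
  fix h assume "0 < h" "h < t - ts ! i"
  then have "g (t - h) = g (ts ! i) + of_int (sl i) * (t - h - ts ! i)"
    and "g t = g (ts ! i) + of_int (sl i) * (t - ts ! i)"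
    using linear_pieces_on_piece[OF pieces i, of "t - h"] linear_pieces_on_piece[OF pieces i, of t] t
    by simp_all
  then show "g (t - h) = g t + of_int (- sl i) * h" by (simp add: algebra_simps)
qed

lemma linear_pieces_bracket:
  assumes pieces: "linear_pieces g ts sl" and t: "ts ! 0 < t" "t < last ts" "t \<notin> set ts"
  obtains i where "Suc i < length ts" "ts ! i < t" "t < ts ! Suc i"
proof -
  define P where "P j \<longleftrightarrow> t < ts ! j \<and> j < length ts" for j
  define j where "j = (LEAST j. P j)"
  have "ts \<noteq> []" using pieces unfolding linear_pieces_def by auto
  then have "P (length ts - 1)" using t(2) by (simp add: P_def last_conv_nth)
  then have "P j" unfolding j_def by (rule LeastI)
  then have j: "t < ts ! j" "j < length ts" unfolding P_def by auto
  then obtain i where i: "j = Suc i" using t(1) by (cases j) auto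
  then have "\<not> P i" unfolding j_def using not_less_Least lessI by metis
  then have "ts ! i \<le> t" using i j unfolding P_def by auto
  moreover have "ts ! i \<noteq> t" using t(3) i j by (metis Suc_lessD nth_mem)
  ultimately show thesis using that i j by auto
qed

lemma edge_ord_off_breakpoints:
  assumes "linear_pieces g ts sl" "ts ! 0 < t" "t < last ts" "t \<notin> set ts"
  shows "edge_ord g t = 0"
proof -
  obtain i where "Suc i < length ts" "ts ! i < t" "t < ts ! Suc i"
    using linear_pieces_bracket[OF assms] .
  with assms(1) show ?thesis
    by (simp add: edge_ord_def fwd_slope_on_piece bwd_slope_on_piece)
qed

lemma edge_ord_at_breakpoint:
  assumes pieces: "linear_pieces g ts sl" and k: "Suc (Suc k) < length ts"
  shows "edge_ord g (ts ! Suc k) = sl (Suc k) - sl k"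
  using fwd_slope_on_piece[OF pieces k] bwd_slope_on_piece[OF pieces, of k]
    linear_pieces_less[OF pieces, of k "Suc k"] linear_pieces_less[OF pieces, of "Suc k" "Suc (Suc k)"] k
  by (simp add: edge_ord_def)

lemma sum_edge_ord_breakpoints:
  assumes pieces: "linear_pieces g ts sl"
  shows "(\<Sum>k<length ts - 2. edge_ord g (ts ! Suc k)) = - (fwd_slope g (ts ! 0) + bwd_slope g (last ts))"
proof -
  define n where "n = length ts"
  have n: "2 \<le> n" using pieces unfolding linear_pieces_def n_def by simp
  have "(\<Sum>k<n - 2. edge_ord g (ts ! Suc k)) = (\<Sum>k<n - 2. sl (Suc k) - sl k)"
    using pieces by (intro sum.cong) (auto simp: edge_ord_at_breakpoint n_def)
  also have "\<dots> = sl (n - 2) - sl 0" by (rule sum_lessThan_telescope)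
  also have "fwd_slope g (ts ! 0) = sl 0"
    using fwd_slope_on_piece[OF pieces, of 0] linear_pieces_less[OF pieces, of 0 1] n
    by (simp add: n_def)
  moreover have "bwd_slope g (last ts) = - sl (n - 2)"
  proof -
    have "Suc (n - 2) < length ts" using n by (simp add: n_def)
    moreover have "last ts = ts ! Suc (n - 2)"
      using n by (simp add: n_def last_conv_nth Suc_diff_Suc numeral_2_eq_2 flip: length_greater_0_conv)
    ultimately show ?thesis
      using bwd_slope_on_piece[OF pieces] linear_pieces_less[OF pieces, of "n - 2"] by simp
  qed
  ultimately show ?thesis by (simp add: n_def)
qed

lemma linear_pieces_inner_inj:
  assumes "linear_pieces g ts sl"
  shows "inj_on (\<lambda>k. ts ! Suc k) {..<length ts - 2}"
proof (rule inj_onI)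
  fix k k' assume "k \<in> {..<length ts - 2}" "k' \<in> {..<length ts - 2}" "ts ! Suc k = ts ! Suc k'"
  then show "k = k'"
    using linear_pieces_less[OF assms, of "Suc k" "Suc k'"] linear_pieces_less[OF assms, of "Suc k'" "Suc k"]
    by (cases k k' rule: linorder_cases) (auto simp: less_diff_conv)
qed

lemma linear_pieces_inner_breakpoint:
  assumes pieces: "linear_pieces g ts sl" and t: "t \<in> set ts" "ts ! 0 < t" "t < last ts"
  shows "t \<in> (\<lambda>k. ts ! Suc k) ` {..<length ts - 2}"
proof -
  obtain j where j: "j < length ts" "ts ! j = t" using t(1) by (auto simp: in_set_conv_nth)
  have "ts \<noteq> []" using j by auto
  then have "j \<noteq> 0" "j \<noteq> length ts - 1" using j(2) t(2,3) by (metis last_conv_nth less_irrefl)+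
  then obtain k where "j = Suc k" "k < length ts - 2" using j(1) by (cases j) auto
  then show ?thesis using j(2) by auto
qed

lemma sum_edge_ord:
  assumes pl: "pl_int_on g M" and S: "finite S" "S \<subseteq> {0<..<M}"
    and support: "\<And>t. 0 < t \<Longrightarrow> t < M \<Longrightarrow> t \<notin> S \<Longrightarrow> edge_ord g t = 0"
  shows "(\<Sum>t\<in>S. edge_ord g t) = - (fwd_slope g 0 + bwd_slope g M)"
proof -
  obtain ts sl where pieces: "linear_pieces g ts sl" and ends: "ts ! 0 = 0" "last ts = M"
    using pl by (rule pl_int_on_linear_pieces)
  define B where "B = (\<lambda>k. ts ! Suc k) ` {..<length ts - 2}"
  have "2 \<le> length ts" using pieces unfolding linear_pieces_def by simp
  then have last: "ts ! (length ts - 1) = M"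
    using ends by (simp add: last_conv_nth flip: length_greater_0_conv)
  have B_interior: "B \<subseteq> {0<..<M}"
    using linear_pieces_less[OF pieces, of 0] linear_pieces_less[OF pieces, of _ "length ts - 1"]
      ends(1) last by (auto simp: B_def)
  have "(\<Sum>t\<in>S. edge_ord g t) = (\<Sum>t\<in>S \<union> B. edge_ord g t)"
    using S B_interior support by (intro sum.mono_neutral_left) (auto simp: B_def)
  also have "\<dots> = (\<Sum>t\<in>B. edge_ord g t)"
  proof (rule sum.mono_neutral_right)
    show "\<forall>t\<in>S \<union> B - B. edge_ord g t = 0"
    proof
      fix t assume "t \<in> S \<union> B - B"
      then have "0 < t" "t < M" "t \<notin> B" using S(2) by auto
      then show "edge_ord g t = 0"
        using linear_pieces_inner_breakpoint[OF pieces] ends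
        by (intro edge_ord_off_breakpoints[OF pieces]) (auto simp: B_def)
    qed
  qed (use S B_def in auto)
  also have "\<dots> = (\<Sum>k<length ts - 2. edge_ord g (ts ! Suc k))"
    unfolding B_def using linear_pieces_inner_inj[OF pieces] by (simp add: sum.reindex)
  also have "\<dots> = - (fwd_slope g 0 + bwd_slope g M)"
    using sum_edge_ord_breakpoints[OF pieces] ends by simp
  finally show ?thesis .
qed

lemma plus_prin_Pt:
  assumes "vertex_supported G D" "e \<in> edges G" "0 < t" "t < elen G e"
  shows "plus_prin G D f (Pt e t) = edge_ord (edge_fun G f e) t"
  using assms
  by (auto simp: vertex_supported_def plus_prin_def prin_def valid_pt_def ordf_def edge_ord_def)

lemma plus_prin_Vtx_cong:
  assumes "\<And>e. e \<in> edges G \<Longrightarrow> vertex_slopes G f e = vertex_slopes G f' e"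
  shows "plus_prin G D f (Vtx v) = plus_prin G D f' (Vtx v)"
proof -
  have "(\<Sum>e | e \<in> edges G \<and> tail G e = v. fwd_slope (edge_fun G f e) 0)
      = (\<Sum>e | e \<in> edges G \<and> tail G e = v. fwd_slope (edge_fun G f' e) 0)"
    using assms by (intro sum.cong) (auto simp: vertex_slopes_def)
  moreover have "(\<Sum>e | e \<in> edges G \<and> head G e = v. bwd_slope (edge_fun G f e) (elen G e))
      = (\<Sum>e | e \<in> edges G \<and> head G e = v. bwd_slope (edge_fun G f' e) (elen G e))"
    using assms by (intro sum.cong) (auto simp: vertex_slopes_def)
  ultimately show ?thesis by (simp add: plus_prin_def prin_def ordf_def)
qed

lemma anchor_cell_edge_cases:
  assumes cell: "in_cell G D dv part m L" and e: "e \<in> edges G"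
    and pos: "\<forall>k\<in>set (part e). 0 < k" and anchor: "anchor_divisor G L"
  obtains "part e = []" "\<forall>t. 0 < t \<and> t < elen G e \<longrightarrow> L (Pt e t) = 0"
  | x where "part e = [nat (L (Pt e x))]" "0 < L (Pt e x)" "0 < x" "x < elen G e"
      "\<forall>t. 0 < t \<and> t < elen G e \<and> t \<noteq> x \<longrightarrow> L (Pt e t) = 0"
proof -
  obtain xs :: "real list" where xs: "length xs = length (part e)" "sorted_wrt (<) xs"
    "\<forall>x\<in>set xs. 0 < x \<and> x < elen G e" "\<forall>i<length xs. L (Pt e (xs ! i)) = int (part e ! i)"
    "\<forall>t. 0 < t \<and> t < elen G e \<and> t \<notin> set xs \<longrightarrow> L (Pt e t) = 0"
    using cell e unfolding in_cell_def by blast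
  have L_pos: "0 < L (Pt e (xs ! i))" "0 < xs ! i" "xs ! i < elen G e" if i: "i < length xs" for i
  proof -
    have "part e ! i \<in> set (part e)" using i xs(1) by simp
    then show "0 < L (Pt e (xs ! i))" using i xs(4) pos by simp
    show "0 < xs ! i" "xs ! i < elen G e" using i xs(3) nth_mem by blast+
  qed
  have "length xs \<le> 1"
  proof (rule ccontr)
    assume "\<not> length xs \<le> 1"
    then have two: "0 < length xs" "1 < length xs" by linarith+
    then have "xs ! 0 < xs ! 1" using sorted_wrt_nth_less[OF xs(2), of 0 1] by simp
    moreover have "xs ! 0 = xs ! 1"
      using anchor e L_pos[OF two(1)] L_pos[OF two(2)] unfolding anchor_divisor_def by blast
    ultimately show False by simp
  qed
  then consider "xs = []" | x where "xs = [x]" by (cases xs) auto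
  then show thesis
  proof cases
    case 1
    then show thesis using that(1) xs(1,5) by simp
  next
    case (2 x)
    with xs(1) obtain k where "part e = [k]" by (cases "part e") auto
    then show thesis using that(2)[of x] L_pos[of 0] xs(4,5) 2 by auto
  qed
qed

lemma anchor_cell_partition:
  assumes vs: "vertex_supported G D" and fR: "f \<in> RD G D" and e: "e \<in> edges G"
    and cell: "in_cell G D dv part m (plus_prin G D f)" and pos: "\<forall>k\<in>set (part e). 0 < k"
    and anchor: "anchor_divisor G (plus_prin G D f)"
  shows "part e = (let T = - (fwd_slope (edge_fun G f e) 0 + bwd_slope (edge_fun G f e) (elen G e))
                   in if T = 0 then [] else [nat T])"
proof -
  define g where "g = edge_fun G f e"
  define M where "M = elen G e"
  have pl: "pl_int_on g M" using fR e unfolding RD_def rat_fun_def g_def M_def by auto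
  have L_edge: "plus_prin G D f (Pt e t) = edge_ord g t" if "0 < t" "t < M" for t
    using plus_prin_Pt[OF vs e] that by (simp add: g_def M_def)
  from cell e pos anchor
  have "part e = (let T = - (fwd_slope g 0 + bwd_slope g M) in if T = 0 then [] else [nat T])"
  proof (cases rule: anchor_cell_edge_cases)
    case 1
    then have "(\<Sum>t\<in>{}. edge_ord g t) = - (fwd_slope g 0 + bwd_slope g M)"
      using L_edge by (intro sum_edge_ord[OF pl]) (auto simp: M_def)
    then show ?thesis using 1 by simp
  next
    case (2 x)
    then have "(\<Sum>t\<in>{x}. edge_ord g t) = - (fwd_slope g 0 + bwd_slope g M)"
      using L_edge by (intro sum_edge_ord[OF pl]) (auto simp: M_def)
    then show ?thesis using 2 L_edge[of x] by (simp add: M_def)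
  qed
  then show ?thesis by (simp add: g_def M_def)
qed

lemma anchor_cell_representative:
  assumes "anchor_cell G D C" "L \<in> C"
  obtains dv part m where "\<forall>e\<in>edges G. \<forall>k\<in>set (part e). 0 < k"
    "C = {L. in_cell G D dv part m L}" "in_cell G D dv part m L" "anchor_divisor G L"
  using assms unfolding anchor_cell_def is_cell_def by blast

lemma in_cell_cong:
  assumes "\<forall>v\<in>verts G. dv v = dv' v" "\<forall>e\<in>edges G. part e = part' e" "\<forall>e\<in>edges G. m e = m' e"
  shows "in_cell G D dv part m = in_cell G D dv' part' m'"
  using assms unfolding in_cell_def by (intro ext) simp

theorem corollary2p16:
  fixes G :: "('v,'e) mgraph" and D :: "('v,'e) point \<Rightarrow> int"
    and C C' :: "(('v,'e) point \<Rightarrow> int) set" and f f' :: "('v,'e) point \<Rightarrow> real"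
  assumes "metric_graph G" and "divisor G D" and "vertex_supported G D"
    and "anchor_cell G D C" and "f \<in> RD G D" and "plus_prin G D f \<in> C"
    and "anchor_cell G D C'" and "f' \<in> RD G D" and "plus_prin G D f' \<in> C'"
    and "\<forall>e\<in>edges G. vertex_slopes G f e = vertex_slopes G f' e"
  shows "C = C'"
proof -
  obtain dv part m where pos: "\<forall>e\<in>edges G. \<forall>k\<in>set (part e). 0 < k"
    and C: "C = {L. in_cell G D dv part m L}" and cell: "in_cell G D dv part m (plus_prin G D f)"
    and anchor: "anchor_divisor G (plus_prin G D f)"
    using assms(4,6) by (rule anchor_cell_representative)
  obtain dv' part' m' where pos': "\<forall>e\<in>edges G. \<forall>k\<in>set (part' e). 0 < k"
    and C': "C' = {L. in_cell G D dv' part' m' L}" and cell': "in_cell G D dv' part' m' (plus_prin G D f')"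
    and anchor': "anchor_divisor G (plus_prin G D f')"
    using assms(7,9) by (rule anchor_cell_representative)
  have slopes: "fwd_slope (edge_fun G f e) 0 = fwd_slope (edge_fun G f' e) 0"
    "bwd_slope (edge_fun G f e) (elen G e) = bwd_slope (edge_fun G f' e) (elen G e)"
    if "e \<in> edges G" for e
    using assms(10) that by (simp_all add: vertex_slopes_def)
  have "\<forall>v\<in>verts G. dv v = dv' v"
    using cell cell' plus_prin_Vtx_cong[of G f f' D] assms(10) unfolding in_cell_def by force
  moreover have "\<forall>e\<in>edges G. part e = part' e"
    using anchor_cell_partition[OF assms(3,5) _ cell _ anchor]
      anchor_cell_partition[OF assms(3,8) _ cell' _ anchor'] pos pos' slopes by simp
  moreover have "\<forall>e\<in>edges G. m e = m' e"
    using cell cell' assms(5,8) slopes(1) unfolding in_cell_def by metis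
  ultimately have "in_cell G D dv part m = in_cell G D dv' part' m'" by (rule in_cell_cong)
  then show ?thesis unfolding C C' by simp
qed

end
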